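(* Let $m\in\{1,2,3\}$ and let $S\ni h$ be a polarized lattice that is $(m-1)$-admissible (no condition if $m=1$), with $h^2\ge4$ if $m=2$ and $h^2=8$ if $m=3$. Let $\Delta$ be a Weyl chamber for $\operatorname{rt}(S,h)$ and $\bar P$ the closed fundamental polyhedron extending $\Delta$. If $S\ni h$ fails to be $m$-admissible, then there exists an $m$-isotropic vector $w\in\bar P$.
   Context: All lattices are even; $(S,h)$ polarized means $S$ hyperbolic, $h^2>0$. $\operatorname{rt}(S,h)$ is the root lattice spanned by $\{r\in S: r^2=-2,\ r\cdot h=0\}$, and a Weyl chamber $\Delta$ for it is given by its set of positive roots $P_\Delta$. The closed fundamental polyhedron is $\bar P=\{v\in S\otimes\mathbb{R}: v^2\ge0,\ v\cdot h\ge0,\ v\cdot r\ge0 \text{ for all } r\in P_\Delta \text{ and all roots } r \text{ with } r\cdot h>0\}$. A vector $w$ is $m$-isotropic if $w^2=0$ and $w\cdot h=m$. $S\ni h$ is $1$-admissible if it has no $1$-isotropic vector; $2$-admissible (defined for $h^2\ge4$) if moreover it has no $2$-isotropic vector; $3$-admissible (defined for $h^2=8$) if moreover it has no $3$-isotropic vector. *)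

theory Defs
  imports "HOL-Analysis.Analysis"
begin

text \<open>An even lattice S of rank CARD('n) is modelled as the free module int^'n with an
integral symmetric Gram matrix G (the bilinear form on the standard basis).
S \<otimes> R is real^'n with the same form.\<close>

definition bf :: "int^'n^'n \<Rightarrow> int^'n \<Rightarrow> int^'n \<Rightarrow> int" where
  "bf G x y = (\<Sum>i\<in>UNIV. \<Sum>j\<in>UNIV. G$i$j * x$i * y$j)"

definition bfR :: "int^'n^'n \<Rightarrow> real^'n \<Rightarrow> real^'n \<Rightarrow> real" where
  "bfR G x y = (\<Sum>i\<in>UNIV. \<Sum>j\<in>UNIV. of_int (G$i$j) * x$i * y$j)"

definition realv :: "int^'n \<Rightarrow> real^'n" where
  "realv x = (\<chi> i. of_int (x$i))"

definition even_lattice :: "int^'n^'n \<Rightarrow> bool" where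
  "even_lattice G \<longleftrightarrow> (\<forall>i j. G$i$j = G$j$i) \<and> (\<forall>i. even (G$i$i))"

text \<open>Hyperbolic: signature (1, rank-1), i.e. there is a real vector of positive square
whose orthogonal complement is negative definite.\<close>
definition hyperbolic :: "int^'n^'n \<Rightarrow> bool" where
  "hyperbolic G \<longleftrightarrow> (\<exists>e. bfR G e e > 0 \<and>
      (\<forall>x. bfR G e x = 0 \<and> x \<noteq> 0 \<longrightarrow> bfR G x x < 0))"

definition polarized :: "int^'n^'n \<Rightarrow> int^'n \<Rightarrow> bool" where
  "polarized G h \<longleftrightarrow> even_lattice G \<and> hyperbolic G \<and> bf G h h > 0"

definition roots_h :: "int^'n^'n \<Rightarrow> int^'n \<Rightarrow> (int^'n) set" where
  "roots_h G h = {r. bf G r r = -2 \<and> bf G r h = 0}"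

text \<open>P is the set of positive roots of a Weyl chamber of rt(S,h): the roots on the
positive side of some real vector lying on no root hyperplane.\<close>
definition weyl_positive_roots :: "int^'n^'n \<Rightarrow> int^'n \<Rightarrow> (int^'n) set \<Rightarrow> bool" where
  "weyl_positive_roots G h P \<longleftrightarrow> (\<exists>\<xi>::real^'n.
      (\<forall>r\<in>roots_h G h. bfR G \<xi> (realv r) \<noteq> 0) \<and>
      P = {r\<in>roots_h G h. bfR G \<xi> (realv r) > 0})"

definition closed_fund_polyhedron :: "int^'n^'n \<Rightarrow> int^'n \<Rightarrow> (int^'n) set \<Rightarrow> (real^'n) set" where
  "closed_fund_polyhedron G h P = {v. bfR G v v \<ge> 0 \<and> bfR G v (realv h) \<ge> 0 \<and>
      (\<forall>r\<in>P. bfR G v (realv r) \<ge> 0) \<and>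
      (\<forall>r. bf G r r = -2 \<and> bf G r h > 0 \<longrightarrow> bfR G v (realv r) \<ge> 0)}"

definition isotropic :: "int^'n^'n \<Rightarrow> int^'n \<Rightarrow> int \<Rightarrow> int^'n \<Rightarrow> bool" where
  "isotropic G h m w \<longleftrightarrow> bf G w w = 0 \<and> bf G w h = m"

definition admissible :: "int^'n^'n \<Rightarrow> int^'n \<Rightarrow> nat \<Rightarrow> bool" where
  "admissible G h k \<longleftrightarrow> (\<forall>j\<in>{1..k}. \<not> (\<exists>w. isotropic G h (int j) w))"

end

theory Submission
  imports Defs
begin

(* The m-isotropic vectors form a finite set: h^\<perp> is negative definite, so
   2 (w.h)^2 - h^2 w^2 is a positive definite form, and it equals 2 m^2 on them. Pick such a
   w minimising w.\<xi>, where \<xi> defines the Weyl chamber. If w.r < 0 for a positive root r,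
   the reflection w + (w.r) r is again m-isotropic with smaller \<xi>-value. If w.r < 0 for a
   root r with r.h > 0, the reflection w' is isotropic with w'.h \<le> m - 1, and
   w.w' = (w.r)^2 > 0 puts w' in the same half of the light cone as w, so w'.h \<ge> 1,
   contradicting (m-1)-admissibility. *)

definition symmetric_gram :: "int^'n^'n \<Rightarrow> bool" where
  "symmetric_gram G \<longleftrightarrow> (\<forall>i j. G$i$j = G$j$i)"

lemma even_lattice_imp_symmetric_gram: "even_lattice G \<Longrightarrow> symmetric_gram G"
  by (simp add: even_lattice_def symmetric_gram_def)

lemma bilinear_bfR: "bilinear (bfR G)"
  unfolding bilinear_def bfR_def
  by (auto intro!: linearI simp: algebra_simps sum.distrib sum_distrib_left)

lemmas bfR_add_left = bilinear_ladd[OF bilinear_bfR]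
  and bfR_add_right = bilinear_radd[OF bilinear_bfR]
  and bfR_diff_left = bilinear_lsub[OF bilinear_bfR]
  and bfR_diff_right = bilinear_rsub[OF bilinear_bfR]
  and bfR_scaleR_left = bilinear_lmul[OF bilinear_bfR, simplified]
  and bfR_scaleR_right = bilinear_rmul[OF bilinear_bfR, simplified]
  and bfR_zero_left [simp] = bilinear_lzero[OF bilinear_bfR]
  and bfR_zero_right [simp] = bilinear_rzero[OF bilinear_bfR]

lemmas bfR_linear_simps = bfR_add_left bfR_add_right bfR_diff_left bfR_diff_right
  bfR_scaleR_left bfR_scaleR_right

lemma bfR_commute: "symmetric_gram G \<Longrightarrow> bfR G x y = bfR G y x"
  unfolding bfR_def symmetric_gram_def by (subst sum.swap) (simp add: algebra_simps)

lemma bfR_realv [simp]: "bfR G (realv x) (realv y) = of_int (bf G x y)"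
  by (simp add: bfR_def bf_def realv_def)

lemma realv_add: "realv (x + y) = realv x + realv y"
  by (simp add: realv_def vec_eq_iff)

lemma realv_smult: "realv (c *s x) = of_int c *\<^sub>R realv x"
  by (simp add: realv_def vec_eq_iff)

lemma bf_add_left: "bf G (x + y) z = bf G x z + bf G y z"
  by (simp add: bf_def algebra_simps sum.distrib)

lemma bf_smult_left: "bf G (c *s x) y = c * bf G x y"
  by (simp add: bf_def algebra_simps sum_distrib_left)

lemma bf_add_right: "bf G x (y + z) = bf G x y + bf G x z"
  by (simp add: bf_def algebra_simps sum.distrib)

lemma bf_smult_right: "bf G x (c *s y) = c * bf G x y"
  by (simp add: bf_def algebra_simps sum_distrib_left)

lemma bf_commute: "symmetric_gram G \<Longrightarrow> bf G x y = bf G y x"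
  using bfR_commute[of G "realv x" "realv y"] by simp

lemma continuous_on_bfR [continuous_intros]:
  "continuous_on S f \<Longrightarrow> continuous_on S g \<Longrightarrow> continuous_on S (\<lambda>x. bfR G (f x) (g x))"
  unfolding bfR_def by (intro continuous_intros)

lemma hyperbolic_orthogonal_negative:
  assumes sym: "symmetric_gram G" and hyp: "hyperbolic G" and hh: "bfR G h h > 0"
    and xh: "bfR G x h = 0" and x0: "x \<noteq> 0"
  shows "bfR G x x < 0"
proof (rule ccontr)
  assume x_nonneg: "\<not> bfR G x x < 0"
  obtain e where e_neg: "\<And>y. bfR G e y = 0 \<Longrightarrow> y \<noteq> 0 \<Longrightarrow> bfR G y y < 0"
    using hyp unfolding hyperbolic_def by blast
  define a b where "a = bfR G e x" and "b = bfR G e h"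
  define y where "y = a *\<^sub>R h - b *\<^sub>R x"
  have hx: "bfR G h x = 0" using xh bfR_commute[OF sym] by metis
  have "h \<noteq> 0" using hh by auto
  then have b0: "b \<noteq> 0" using e_neg[of h] hh by (auto simp: b_def)
  have "y \<noteq> 0"
  proof
    assume y0: "y = 0"
    have "bfR G y h = a * bfR G h h" by (simp add: y_def bfR_linear_simps xh)
    with y0 hh have "a = 0" by simp
    with y0 have "b *\<^sub>R x = 0" by (simp add: y_def)
    with b0 x0 show False by simp
  qed
  moreover have "bfR G e y = 0" by (simp add: y_def a_def b_def bfR_linear_simps)
  ultimately have "bfR G y y < 0" by (rule e_neg[rotated])
  moreover have "bfR G y y = a^2 * bfR G h h + b^2 * bfR G x x"
    by (simp add: y_def bfR_linear_simps xh hx power2_eq_square)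
  ultimately show False using hh x_nonneg
    by (smt (verit) zero_le_power2 mult_nonneg_nonneg)
qed

lemma hyperbolic_discriminant_pos:
  assumes sym: "symmetric_gram G" and hyp: "hyperbolic G" and hh: "bfR G h h > 0"
    and u0: "u \<noteq> 0"
  shows "2 * (bfR G u h)^2 - bfR G h h * bfR G u u > 0"
proof -
  define v where "v = u - (bfR G u h / bfR G h h) *\<^sub>R h"
  have hu: "bfR G h u = bfR G u h" using bfR_commute[OF sym] by metis
  have vh: "bfR G v h = 0" using hh by (simp add: v_def bfR_linear_simps)
  have completed_square: "2 * (bfR G u h)^2 - bfR G h h * bfR G u u = (bfR G u h)^2 - bfR G h h * bfR G v v"
    using hh by (simp add: v_def bfR_linear_simps hu field_simps power2_eq_square)
  show ?thesis
  proof (cases "v = 0")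
    case True
    then have "bfR G u h \<noteq> 0" using u0 by (auto simp: v_def)
    with True show ?thesis unfolding completed_square by simp
  next
    case False
    then have "bfR G v v < 0" using hyperbolic_orthogonal_negative[OF sym hyp hh vh] by simp
    with hh show ?thesis unfolding completed_square by (smt (verit) mult_pos_neg zero_le_power2)
  qed
qed

lemma hyperbolic_discriminant_coercive:
  assumes sym: "symmetric_gram G" and hyp: "hyperbolic G" and hh: "bfR G h h > 0"
  obtains c where "c > 0" and "\<And>u. c * (norm u)^2 \<le> 2 * (bfR G u h)^2 - bfR G h h * bfR G u u"
proof -
  define q where "q u = 2 * (bfR G u h)^2 - bfR G h h * bfR G u u" for u
  have "continuous_on (sphere 0 1) q" unfolding q_def by (intro continuous_intros)
  moreover have "sphere (0 :: real^'n) 1 \<noteq> {}" by simp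
  ultimately obtain u0 where u0: "u0 \<in> sphere 0 1" and u0_min: "\<And>u. u \<in> sphere 0 1 \<Longrightarrow> q u0 \<le> q u"
    using continuous_attains_inf[OF compact_sphere] by metis
  then have "u0 \<noteq> 0" by auto
  then have "q u0 > 0" using hyperbolic_discriminant_pos[OF sym hyp hh] by (simp add: q_def)
  moreover have "q u0 * (norm u)^2 \<le> q u" for u
  proof (cases "u = 0")
    case False
    have q_scale: "q (a *\<^sub>R u) = a^2 * q u" for a
      by (simp add: q_def bfR_linear_simps power2_eq_square algebra_simps)
    have "q u0 \<le> q (inverse (norm u) *\<^sub>R u)"
      using False by (intro u0_min) (simp add: norm_inverse)
    with False show ?thesis by (simp add: q_scale field_simps)
  qed (simp add: q_def)
  ultimately show ?thesis using that unfolding q_def by blast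
qed

lemma finite_int_vectors_norm_le: "finite {w :: int^'n. norm (realv w) \<le> K}"
proof -
  have "finite (Pi\<^sub>E UNIV (\<lambda>_. {-\<lceil>K\<rceil>..\<lceil>K\<rceil>}) :: ('n \<Rightarrow> int) set)"
    by (intro finite_PiE) auto
  then have "finite (vec_nth -` Pi\<^sub>E UNIV (\<lambda>_. {-\<lceil>K\<rceil>..\<lceil>K\<rceil>}) :: (int^'n) set)"
    by (rule finite_vimageI) (simp add: inj_def vec_eq_iff)
  moreover have "{w. norm (realv w) \<le> K} \<subseteq> vec_nth -` Pi\<^sub>E UNIV (\<lambda>_. {-\<lceil>K\<rceil>..\<lceil>K\<rceil>})"
  proof
    fix w
    assume "w \<in> {w. norm (realv w) \<le> K}"
    then have "\<bar>w$i\<bar> \<le> \<lceil>K\<rceil>" for i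
      using component_le_norm_cart[of "realv w" i] by (simp add: realv_def) linarith
    then show "w \<in> vec_nth -` Pi\<^sub>E UNIV (\<lambda>_. {-\<lceil>K\<rceil>..\<lceil>K\<rceil>})"
      by (auto simp: PiE_UNIV_domain Pi_iff abs_le_iff minus_le_iff)
  qed
  ultimately show ?thesis by (rule finite_subset[rotated])
qed

lemma finite_isotropic:
  assumes sym: "symmetric_gram G" and hyp: "hyperbolic G" and hh: "bf G h h > 0"
  shows "finite {w. isotropic G h m w}"
proof -
  obtain c where c: "c > 0"
    and coercive: "\<And>u. c * (norm u)^2 \<le> 2 * (bfR G u (realv h))^2 - bf G h h * bfR G u u"
    using hyperbolic_discriminant_coercive[OF sym hyp, of "realv h"] hh by auto
  have "norm (realv w) \<le> sqrt (2 * m^2 / c)" if "isotropic G h m w" for w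
  proof (rule real_le_rsqrt)
    have "c * (norm (realv w))^2 \<le> 2 * m^2"
      using coercive[of "realv w"] that by (simp add: isotropic_def)
    with c show "(norm (realv w))^2 \<le> 2 * m^2 / c" by (simp add: field_simps)
  qed
  then have "{w. isotropic G h m w} \<subseteq> {w. norm (realv w) \<le> sqrt (2 * m^2 / c)}" by blast
  then show ?thesis using finite_int_vectors_norm_le finite_subset by blast
qed

lemma isotropic_same_half_cone:
  assumes sym: "symmetric_gram G" and hyp: "hyperbolic G" and hh: "bfR G h h > 0"
    and ww: "bfR G w w = 0" and w'w': "bfR G w' w' = 0"
    and wh: "bfR G w h > 0" and ww': "bfR G w w' > 0"
  shows "bfR G w' h > 0"
proof (rule ccontr)
  assume "\<not> bfR G w' h > 0"
  then have w'h: "bfR G w' h \<le> 0" by simp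
  define y where "y = bfR G w' h *\<^sub>R w - bfR G w h *\<^sub>R w'"
  have w'w: "bfR G w' w = bfR G w w'" by (rule bfR_commute[OF sym])
  have yh: "bfR G y h = 0" by (simp add: y_def bfR_linear_simps)
  have "bfR G y y = - 2 * bfR G w' h * bfR G w h * bfR G w w'"
    by (simp add: y_def bfR_linear_simps ww w'w' w'w)
  also have "\<dots> \<ge> 0"
    using w'h wh ww' by (simp add: mult_nonpos_nonneg mult_nonneg_nonneg)
  finally have "y = 0" using hyperbolic_orthogonal_negative[OF sym hyp hh yh] by fastforce
  moreover have "bfR G y w = - bfR G w h * bfR G w w'"
    by (simp add: y_def bfR_linear_simps ww w'w)
  ultimately show False using wh ww' by simp
qed

definition reflection :: "int^'n^'n \<Rightarrow> int^'n \<Rightarrow> int^'n \<Rightarrow> int^'n" where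
  "reflection G r w = w + bf G w r *s r"

lemma bf_reflection_left: "bf G (reflection G r w) x = bf G w x + bf G w r * bf G r x"
  by (simp add: reflection_def bf_add_left bf_smult_left)

lemma bf_reflection_reflection:
  assumes "symmetric_gram G" and "bf G r r = -2"
  shows "bf G (reflection G r w) (reflection G r w) = bf G w w"
  using assms bf_commute[OF assms(1), of r w]
  by (simp add: reflection_def bf_add_left bf_add_right bf_smult_left bf_smult_right algebra_simps)

lemma realv_reflection: "realv (reflection G r w) = realv w + of_int (bf G w r) *\<^sub>R realv r"
  by (simp add: reflection_def realv_add realv_smult)

lemma isotropic_reflection:
  assumes "symmetric_gram G" and "r \<in> roots_h G h" and "isotropic G h m w"
  shows "isotropic G h m (reflection G r w)"
proof -
  have rr: "bf G r r = -2" and rh: "bf G r h = 0" using assms(2) by (auto simp: roots_h_def)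
  have "bf G (reflection G r w) (reflection G r w) = bf G w w"
    by (rule bf_reflection_reflection[OF assms(1) rr])
  moreover have "bf G (reflection G r w) h = bf G w h" by (simp add: bf_reflection_left rh)
  ultimately show ?thesis using assms(3) by (simp add: isotropic_def)
qed

lemma admissibleD:
  assumes "admissible G h k" and "1 \<le> q" and "q \<le> int k"
  shows "\<not> isotropic G h q w"
proof -
  have "nat q \<in> {1..k}" using assms(2,3) by auto
  with assms(1) have "\<not> isotropic G h (int (nat q)) w" unfolding admissible_def by blast
  with assms(2) show ?thesis by simp
qed

lemma isotropic_of_not_admissible_Suc:
  assumes "admissible G h k" and "\<not> admissible G h (Suc k)"
  obtains w where "isotropic G h (int (Suc k)) w"
proof -
  obtain j w where j: "j \<in> {1..Suc k}" and w: "isotropic G h (int j) w"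
    using assms(2) unfolding admissible_def by blast
  have "j \<notin> {1..k}" using assms(1) w unfolding admissible_def by blast
  with j have "j = Suc k" by simp
  with w that show ?thesis by blast
qed

lemma minimal_isotropic_nonneg_on_positive_roots:
  assumes sym: "symmetric_gram G" and w: "isotropic G h m w"
    and min: "\<And>w'. isotropic G h m w' \<Longrightarrow> bfR G \<xi> (realv w) \<le> bfR G \<xi> (realv w')"
    and r: "r \<in> roots_h G h" and \<xi>r: "bfR G \<xi> (realv r) > 0"
  shows "bf G w r \<ge> 0"
proof (rule ccontr)
  assume "\<not> bf G w r \<ge> 0"
  then have "of_int (bf G w r) * bfR G \<xi> (realv r) < 0" using \<xi>r by (simp add: mult_neg_pos)
  then have "bfR G \<xi> (realv (reflection G r w)) < bfR G \<xi> (realv w)"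
    by (simp add: realv_reflection bfR_linear_simps)
  with min[OF isotropic_reflection[OF sym r w]] show False by simp
qed

lemma admissible_isotropic_nonneg_on_h_positive_roots:
  assumes sym: "symmetric_gram G" and hyp: "hyperbolic G" and hh: "bf G h h > 0"
    and adm: "admissible G h k" and w: "isotropic G h (int k + 1) w"
    and rr: "bf G r r = -2" and rh: "bf G r h > 0"
  shows "bf G w r \<ge> 0"
proof (rule ccontr)
  assume "\<not> bf G w r \<ge> 0"
  then have c: "bf G w r \<le> -1" by simp
  define w' where "w' = reflection G r w"
  have ww: "bf G w w = 0" and wh: "bf G w h = int k + 1" using w by (auto simp: isotropic_def)
  have w'w': "bf G w' w' = 0" using bf_reflection_reflection[OF sym rr] ww by (simp add: w'_def)
  have "bf G w r * bf G r h \<le> -1 * bf G r h" using c rh by (intro mult_right_mono) auto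
  then have w'h_le: "bf G w' h \<le> int k"
    using rh by (simp add: w'_def bf_reflection_left wh)
  have "bf G w' w = (bf G w r)^2"
    by (simp add: w'_def bf_reflection_left ww bf_commute[OF sym, of r w] power2_eq_square)
  then have "bfR G (realv w) (realv w') > 0"
    using c bf_commute[OF sym, of w w'] by simp
  then have "bfR G (realv w') (realv h) > 0"
    using isotropic_same_half_cone[OF sym hyp, of "realv h" "realv w" "realv w'"] hh ww w'w' wh
    by simp
  then have "1 \<le> bf G w' h" by simp
  with admissibleD[OF adm _ w'h_le, where w = w'] w'w' show False by (simp add: isotropic_def)
qed

theorem mainTheorem11:
  fixes G :: "int^'n^'n" and h :: "int^'n" and P :: "(int^'n) set" and m :: nat
  assumes "m \<in> {1,2,3}"
    and "polarized G h"
    and "admissible G h (m - 1)"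
    and "m = 2 \<longrightarrow> bf G h h \<ge> 4"
    and "m = 3 \<longrightarrow> bf G h h = 8"
    and "weyl_positive_roots G h P"
    and "\<not> admissible G h m"
  shows "\<exists>w. isotropic G h (int m) w \<and> realv w \<in> closed_fund_polyhedron G h P"
proof -
  have sym: "symmetric_gram G" and hyp: "hyperbolic G" and hh: "bf G h h > 0"
    using assms(2) by (auto simp: polarized_def even_lattice_imp_symmetric_gram)
  obtain k where m: "m = Suc k" using assms(1) by auto
  have adm: "admissible G h k" and m_int: "int m = int k + 1" using assms(3) m by simp_all
  obtain w0 where "isotropic G h (int m) w0"
    using isotropic_of_not_admissible_Suc[OF adm] assms(7) m by blast
  obtain \<xi> where P: "P = {r \<in> roots_h G h. bfR G \<xi> (realv r) > 0}"
    using assms(6) by (auto simp: weyl_positive_roots_def)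
  let ?M = "{w. isotropic G h (int m) w}"
  have "finite ?M" by (rule finite_isotropic[OF sym hyp hh])
  moreover have "?M \<noteq> {}" using \<open>isotropic G h (int m) w0\<close> by blast
  ultimately obtain w where "is_arg_min (\<lambda>w. bfR G \<xi> (realv w)) (\<lambda>w. w \<in> ?M) w"
    using ex_is_arg_min_if_finite by blast
  then have w: "isotropic G h (int m) w"
    and min: "\<And>w'. isotropic G h (int m) w' \<Longrightarrow> bfR G \<xi> (realv w) \<le> bfR G \<xi> (realv w')"
    by (auto simp: is_arg_min_def not_less)
  have "\<forall>r\<in>P. bf G w r \<ge> 0"
    using minimal_isotropic_nonneg_on_positive_roots[OF sym w min] P by blast
  moreover have "\<forall>r. bf G r r = -2 \<and> bf G r h > 0 \<longrightarrow> bf G w r \<ge> 0"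
    using admissible_isotropic_nonneg_on_h_positive_roots[OF sym hyp hh adm] w[unfolded m_int] by blast
  ultimately have "realv w \<in> closed_fund_polyhedron G h P"
    using w unfolding closed_fund_polyhedron_def isotropic_def by simp
  with w show ?thesis by (intro exI conjI)
qed

end
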